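(* Let $\alpha:\mathbb{C}\to\mathbb{C}$ be an exponential automorphism, i.e. a function satisfying $\alpha(z_1+z_2)=\alpha(z_1)+\alpha(z_2)$ and $\alpha(e^z)=e^{\alpha(z)}$ for all $z,z_1,z_2\in\mathbb{C}$. Then for every positive rational number $t$ there is an integer $n=n(\alpha,t)$ such that $\alpha(\ln t)=\ln t+2\pi n i$.
   Context: Here $\ln t$ denotes the usual real-valued natural logarithm of the positive real number $t$. *)

theory Defs
  imports Complex_Main
begin

definition exp_automorphism :: "(complex \<Rightarrow> complex) \<Rightarrow> bool" where
  "exp_automorphism \<alpha> \<longleftrightarrow>
     (\<forall>z1 z2. \<alpha> (z1 + z2) = \<alpha> z1 + \<alpha> z2) \<and> (\<forall>z. \<alpha> (exp z) = exp (\<alpha> z))"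

end

theory Submission
  imports Defs "HOL-Analysis.Analysis"
begin

text \<open>An exponential automorphism is additive and fixes \<open>1 = exp 0\<close>, hence fixes every
  rational number. Therefore \<open>exp (\<alpha> (ln t)) = \<alpha> (exp (ln t)) = \<alpha> t = t = exp (ln t)\<close>,
  and two complex logarithms of \<open>t\<close> differ by an integer multiple of \<open>2 \<pi> i\<close>.\<close>

lemma additive_of_int_mult:
  fixes f :: "'a::ring_1 \<Rightarrow> 'b::ring_1"
  assumes add: "\<And>x y. f (x + y) = f x + f y"
  shows "f (of_int k * x) = of_int k * f x"
proof (induction k rule: int_induct[where k = 0])
  case base
  from add[of 0 0] show ?case by simp
next
  case (step1 i)
  then show ?case using add[of "of_int i * x" x] by (simp add: distrib_right)
next
  case (step2 i)
  have "f (of_int (i - 1) * x) + f x = of_int i * f x"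
    using step2 add[of "of_int (i - 1) * x" x] by (simp add: algebra_simps)
  then show ?case by (simp add: algebra_simps eq_diff_eq)
qed

lemma additive_fixes_Rats:
  fixes f :: "'a::field_char_0 \<Rightarrow> 'a"
  assumes add: "\<And>x y. f (x + y) = f x + f y" and "f 1 = 1" and "x \<in> \<rat>"
  shows "f x = x"
proof -
  obtain a b where "b > 0" and x: "x = of_int a / of_int b"
    using \<open>x \<in> \<rat>\<close> by (cases rule: Rats_cases') blast
  have f_of_int: "f (of_int k) = of_int k" for k
    using additive_of_int_mult[OF add, of k 1] \<open>f 1 = 1\<close> by simp
  have "of_int b * f x = f (of_int b * x)"
    using additive_of_int_mult[OF add] by simp
  also have "\<dots> = of_int b * x"
    using x \<open>b > 0\<close> f_of_int by simp
  finally show ?thesis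
    using \<open>b > 0\<close> by simp
qed

lemma exp_automorphism_fixes_Rats:
  assumes "exp_automorphism \<alpha>" and "z \<in> \<rat>"
  shows "\<alpha> z = z"
proof -
  have add: "\<And>x y. \<alpha> (x + y) = \<alpha> x + \<alpha> y" and exp: "\<And>z. \<alpha> (exp z) = exp (\<alpha> z)"
    using assms(1) unfolding exp_automorphism_def by auto
  have "\<alpha> 0 = 0"
    using add[of 0 0] by simp
  then have "\<alpha> 1 = 1"
    using exp[of 0] by simp
  then show ?thesis
    using additive_fixes_Rats[OF add] \<open>z \<in> \<rat>\<close> by blast
qed

theorem mainTheorem2:
  fixes \<alpha> :: "complex \<Rightarrow> complex" and t :: real
  assumes "exp_automorphism \<alpha>"
    and "t \<in> \<rat>" and "t > 0"
  shows "\<exists>n::int. \<alpha> (complex_of_real (ln t)) = complex_of_real (ln t) + 2 * pi * of_int n * \<i>"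
proof -
  have exp_ln: "exp (complex_of_real (ln t)) = complex_of_real t"
    using \<open>t > 0\<close> exp_of_real[of "ln t"] by simp
  have "exp (\<alpha> (complex_of_real (ln t))) = \<alpha> (exp (complex_of_real (ln t)))"
    using assms(1) unfolding exp_automorphism_def by simp
  also have "\<dots> = exp (complex_of_real (ln t))"
    using exp_automorphism_fixes_Rats[OF assms(1)] \<open>t \<in> \<rat>\<close> exp_ln by simp
  finally obtain n :: int
    where "\<alpha> (complex_of_real (ln t)) = complex_of_real (ln t) + of_int (2 * n) * pi * \<i>"
    using exp_eq by blast
  then show ?thesis
    by (auto simp: algebra_simps)
qed

end
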